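(* Let $a,b,n$ be positive integers with $b\ge a$ and $n\ge 3b(b+1)/a+3b+7$. Let $k=\left\lceil\frac{2b^2+2b}{a}\right\rceil+2b-4$. Then $$\rho\big(K_{k}\nabla(K_2\cup K_{n-k-2})\big)<n-2\quad\text{and}\quad \rho\big(K_{4b}\nabla(K_2\cup K_{n-4b-2})\big)<n-2.$$
   Context: $\rho(G)$ denotes the spectral radius (largest eigenvalue of the adjacency matrix) of a graph $G$. For graphs $G_1,G_2$, the join $G_1\nabla G_2$ is obtained from the disjoint union $G_1\cup G_2$ by adding all edges between $V(G_1)$ and $V(G_2)$; $K_m$ is the complete graph on $m$ vertices. *)

theory Defs
  imports "Jordan_Normal_Form.Spectral_Radius"
begin

text \<open>A finite simple graph on the vertex set {0..<m}, given as (m, adjacency relation).\<close>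
type_synonym graph = "nat \<times> (nat \<Rightarrow> nat \<Rightarrow> bool)"

definition complete_graph :: "nat \<Rightarrow> graph" where
  "complete_graph m = (m, \<lambda>i j. i < m \<and> j < m \<and> i \<noteq> j)"

definition graph_union :: "graph \<Rightarrow> graph \<Rightarrow> graph" where
  "graph_union G H = (fst G + fst H,
     \<lambda>i j. (i < fst G \<and> j < fst G \<and> snd G i j) \<or>
           (fst G \<le> i \<and> fst G \<le> j \<and> i < fst G + fst H \<and> j < fst G + fst H
              \<and> snd H (i - fst G) (j - fst G)))"

definition graph_join :: "graph \<Rightarrow> graph \<Rightarrow> graph" where
  "graph_join G H = (fst G + fst H,
     \<lambda>i j. snd (graph_union G H) i j \<or>
           (i < fst G \<and> fst G \<le> j \<and> j < fst G + fst H) \<or>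
           (j < fst G \<and> fst G \<le> i \<and> i < fst G + fst H))"

definition adjacency_matrix :: "graph \<Rightarrow> complex mat" where
  "adjacency_matrix G = mat (fst G) (fst G) (\<lambda>(i, j). if snd G i j then 1 else 0)"

text \<open>Spectral radius of a graph (= largest adjacency eigenvalue, the matrix being
  nonnegative symmetric).\<close>
definition graph_spectral_radius :: "graph \<Rightarrow> real" where
  "graph_spectral_radius G = spectral_radius (adjacency_matrix G)"

end

theory Submission imports Defs begin

text \<open>Both graphs have the form \<open>K\<^sub>k \<nabla> (K\<^sub>2 \<union> K\<^sub>m)\<close> with \<open>k + m = n - 2\<close>. For a nonnegative
  matrix, a positive vector \<open>x\<close> with \<open>A x < t x\<close> entrywise forces \<open>\<rho>(A) < t\<close> (evaluate an
  eigenvector at the coordinate maximising \<open>|v\<^sub>i| / x\<^sub>i\<close>). Taking \<open>x\<close> constant on the three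
  blocks, equal to \<open>k + 2\<close>, \<open>(k + m + 1) / 2\<close> and \<open>k + 1\<close>, the strict inequality holds as soon
  as \<open>2k(k + 2) + 1 < (k + m)\<^sup>2\<close>, in particular when \<open>3(k + 1) < 2(n - 2)\<close>; both values of
  \<open>k\<close> in the theorem satisfy this under the hypothesis on \<open>n\<close>.\<close>

lemma spectral_radius_less_if_row_sums_less:
  fixes A :: "complex mat" and f :: "nat \<Rightarrow> nat \<Rightarrow> real" and x :: "nat \<Rightarrow> real"
  assumes A: "A \<in> carrier_mat N N" and N: "N > 0"
    and Af: "\<And>i j. i < N \<Longrightarrow> j < N \<Longrightarrow> A $$ (i,j) = of_real (f i j)"
    and f_nonneg: "\<And>i j. f i j \<ge> 0"
    and x_pos: "\<And>i. i < N \<Longrightarrow> x i > 0"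
    and row: "\<And>i. i < N \<Longrightarrow> (\<Sum>j<N. f i j * x j) < t * x i"
  shows "spectral_radius A < t"
proof -
  obtain ev where ev: "ev \<in> spectrum A" and sr: "spectral_radius A = norm ev"
    using spectral_radius_mem_max(1)[OF A N] by auto
  then obtain v where "eigenvector A v ev" unfolding spectrum_def eigenvalue_def by auto
  hence v: "v \<in> carrier_vec N" and v0: "v \<noteq> 0\<^sub>v N" and Av: "A *\<^sub>v v = ev \<cdot>\<^sub>v v"
    using A unfolding eigenvector_def by auto
  define g where "g j = norm (v $ j) / x j" for j
  obtain i where i: "i < N" and i_max: "\<And>j. j < N \<Longrightarrow> g j \<le> g i"
  proof -
    have "Max (g ` {..<N}) \<in> g ` {..<N}" using N by (intro Max_in) auto
    moreover have "\<And>j. j < N \<Longrightarrow> g j \<le> Max (g ` {..<N})" by (intro Max_ge) auto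
    ultimately show ?thesis using that by (metis imageE lessThan_iff)
  qed
  obtain j0 where j0: "j0 < N" "v $ j0 \<noteq> 0"
    using v0 v by (metis carrier_vecD eq_vecI index_zero_vec(1) index_zero_vec(2))
  have "g i > 0"
    using i_max[OF j0(1)] j0 x_pos[OF j0(1)] unfolding g_def by (smt (verit) divide_pos_pos zero_less_norm_iff)
  have norm_v: "norm (v $ j) = g j * x j" if "j < N" for j
    using x_pos[OF that] unfolding g_def by auto
  have "ev * v $ i = (\<Sum>j<N. of_real (f i j) * v $ j)"
    using arg_cong[OF Av, of "\<lambda>w. w $ i"] A v i Af[OF i]
    by (simp add: scalar_prod_def lessThan_atLeast0 mult.commute)
  hence "norm ev * (g i * x i) \<le> (\<Sum>j<N. norm (of_real (f i j) * v $ j))"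
    by (metis norm_mult norm_sum norm_v[OF i])
  also have "\<dots> = (\<Sum>j<N. f i j * (g j * x j))"
    using f_nonneg norm_v by (simp add: norm_mult)
  also have "\<dots> \<le> (\<Sum>j<N. f i j * (g i * x j))"
    using i_max x_pos f_nonneg by (intro sum_mono mult_left_mono mult_right_mono) (auto intro: less_imp_le)
  also have "\<dots> = g i * (\<Sum>j<N. f i j * x j)"
    by (simp add: sum_distrib_left algebra_simps)
  also have "\<dots> < t * (g i * x i)"
    using row[OF i] \<open>g i > 0\<close> by simp
  finally show ?thesis
    unfolding sr using \<open>g i > 0\<close> x_pos[OF i] by (simp add: mult_less_cancel_right)
qed

lemma graph_spectral_radius_less:
  fixes G :: graph and x :: "nat \<Rightarrow> real"
  assumes "fst G > 0"
    and x_pos: "\<And>i. i < fst G \<Longrightarrow> x i > 0"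
    and row: "\<And>i. i < fst G \<Longrightarrow> sum x {j. j < fst G \<and> snd G i j} < t * x i"
  shows "graph_spectral_radius G < t"
  unfolding graph_spectral_radius_def
proof (rule spectral_radius_less_if_row_sums_less)
  fix i assume "i < fst G"
  have "(\<Sum>j<fst G. (if snd G i j then 1 else 0) * x j) = sum x {j \<in> {..<fst G}. snd G i j}"
    by (subst sum.inter_filter) (auto intro: sum.cong)
  also have "\<dots> < t * x i"
    using row[OF \<open>i < fst G\<close>] by simp
  finally show "(\<Sum>j<fst G. (if snd G i j then 1 else 0) * x j) < t * x i" .
qed (use assms in \<open>auto simp: adjacency_matrix_def\<close>)

abbreviation complete_join_K2_union :: "nat \<Rightarrow> nat \<Rightarrow> graph" where
  "complete_join_K2_union k m \<equiv>
     graph_join (complete_graph k) (graph_union (complete_graph 2) (complete_graph m))"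

lemma order_complete_join_K2_union: "fst (complete_join_K2_union k m) = k + 2 + m"
  unfolding graph_join_def graph_union_def complete_graph_def by simp

lemma adjacent_complete_join_K2_union:
  assumes "i < k + 2 + m" "j < k + 2 + m"
  shows "snd (complete_join_K2_union k m) i j \<longleftrightarrow>
    i \<noteq> j \<and> (i < k \<or> j < k \<or> (i < k + 2 \<and> j < k + 2) \<or> (k + 2 \<le> i \<and> k + 2 \<le> j))"
  using assms unfolding graph_join_def graph_union_def complete_graph_def by (simp; presburger)

lemma neighbours_complete_join_K2_union:
  assumes "i < k + 2 + m"
  shows "{j. j < fst (complete_join_K2_union k m) \<and> snd (complete_join_K2_union k m) i j} =
    (if i < k then {..<k + 2 + m} else if i < k + 2 then {..<k + 2} else {..<k} \<union> {k + 2..<k + 2 + m})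
      - {i}"
  using assms by (auto simp: order_complete_join_K2_union adjacent_complete_join_K2_union)

lemma spectral_radius_complete_join_K2_union_less:
  fixes k m :: nat
  assumes "2 * real k * (real k + 2) + 1 < (real k + real m)\<^sup>2"
  shows "graph_spectral_radius (complete_join_K2_union k m) < real k + real m"
proof (rule graph_spectral_radius_less)
  define t :: real where "t = real k + real m"
  define x where "x j = (if j < k then real k + 2 else if j < k + 2 then (t + 1) / 2 else real k + 1)"
    for j
  have lower: "sum x {..<k} = real k * (real k + 2)"
    by (simp add: x_def)
  have upper: "sum x {k + 2..<k + 2 + m} = real m * (real k + 1)"
    by (simp add: x_def)
  have inner: "sum x {..<k + 2} = real k * (real k + 2) + (t + 1)"
    using lower by (simp add: x_def field_simps)
  have "sum x {..<k + 2 + m} = sum x {..<k + 2} + sum x {k + 2..<k + 2 + m}"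
    by (metis add_0 lessThan_atLeast0 le_add1 sum.atLeastLessThan_concat)
  hence all: "sum x {..<k + 2 + m} = real k * (real k + 2) + (t + 1) + real m * (real k + 1)"
    unfolding inner upper .
  have "sum x ({..<k} \<union> {k + 2..<k + 2 + m}) = sum x {..<k} + sum x {k + 2..<k + 2 + m}"
    by (rule sum.union_disjoint) auto
  hence outer: "sum x ({..<k} \<union> {k + 2..<k + 2 + m}) = real k * (real k + 2) + real m * (real k + 1)"
    unfolding lower upper .
  show "fst (complete_join_K2_union k m) > 0"
    by (simp add: order_complete_join_K2_union)
  show "x i > 0" for i
    by (simp add: x_def t_def)
  fix i assume "i < fst (complete_join_K2_union k m)"
  then have i: "i < k + 2 + m" by (simp add: order_complete_join_K2_union)
  consider "i < k" | "k \<le> i" "i < k + 2" | "k + 2 \<le> i" by linarith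
  then show "sum x {j. j < fst (complete_join_K2_union k m) \<and> snd (complete_join_K2_union k m) i j}
      < (real k + real m) * x i"
  proof cases
    case 1
    then show ?thesis
      using all i by (simp add: neighbours_complete_join_K2_union sum_diff1 x_def t_def algebra_simps)
  next
    case 2
    then have "sum x {j. j < fst (complete_join_K2_union k m) \<and> snd (complete_join_K2_union k m) i j}
        = real k * (real k + 2) + (t + 1) / 2"
      using inner i by (simp add: neighbours_complete_join_K2_union sum_diff1 x_def field_simps)
    also have "\<dots> < (t - 1) * ((t + 1) / 2) + (t + 1) / 2"
      using assms unfolding t_def by (simp add: power2_eq_square field_simps)
    also have "\<dots> = (real k + real m) * x i"
      using 2 by (simp add: x_def t_def field_simps)
    finally show ?thesis .
  next
    case 3
    then show ?thesis
      using outer i by (simp add: neighbours_complete_join_K2_union sum_diff1 x_def t_def algebra_simps)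
  qed
qed

lemma spectral_radius_complete_join_K2_union_less_order:
  fixes k n :: nat
  assumes "3 * (real k + 1) < 2 * (real n - 2)"
  shows "graph_spectral_radius (complete_join_K2_union k (n - k - 2)) < real n - 2"
proof -
  have "real (k + 2) \<le> real n" using assms by simp
  hence "k + 2 \<le> n" by linarith
  hence order: "real k + real (n - k - 2) = real n - 2" by (simp add: of_nat_diff)
  have "(3 * (real k + 1))\<^sup>2 < (2 * (real n - 2))\<^sup>2"
    using assms by (intro power_strict_mono) auto
  hence "9 * (real k + 1)\<^sup>2 < 4 * (real n - 2)\<^sup>2"
    by (simp only: power_mult_distrib) simp
  moreover have "4 * (2 * real k * (real k + 2) + 1) \<le> 9 * (real k + 1)\<^sup>2"
    by (simp add: power2_eq_square algebra_simps)
  ultimately have "2 * real k * (real k + 2) + 1 < (real k + real (n - k - 2))\<^sup>2"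
    unfolding order by argo
  from spectral_radius_complete_join_K2_union_less[OF this] show ?thesis
    unfolding order .
qed

theorem lemma2p3:
  fixes a b n k :: nat
  assumes "a > 0" "b > 0" "b \<ge> a"
    and "real n \<ge> 3 * real b * (real b + 1) / real a + 3 * real b + 7"
    and "int k = \<lceil>(2 * real b ^ 2 + 2 * real b) / real a\<rceil> + 2 * int b - 4"
  shows "graph_spectral_radius
           (graph_join (complete_graph k) (graph_union (complete_graph 2) (complete_graph (n - k - 2))))
         < real n - 2 \<and>
         graph_spectral_radius
           (graph_join (complete_graph (4 * b)) (graph_union (complete_graph 2) (complete_graph (n - 4 * b - 2))))
         < real n - 2"
proof (intro conjI spectral_radius_complete_join_K2_union_less_order)
  define X where "X = (2 * real b ^ 2 + 2 * real b) / real a"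
  have n_ge: "real n \<ge> 3 / 2 * X + 3 * real b + 7"
    using assms(1,4) unfolding X_def by (simp add: field_simps power2_eq_square)
  have "real k = real_of_int \<lceil>X\<rceil> + 2 * real b - 4"
    using arg_cong[OF assms(5), of real_of_int] unfolding X_def by simp
  moreover have "real_of_int \<lceil>X\<rceil> < X + 1" by linarith
  ultimately have "real k + 1 < X + 2 * real b - 2"
    by linarith
  then show "3 * (real k + 1) < 2 * (real n - 2)"
    using n_ge by argo
  have "real a * (real b + 1) \<le> real b * (real b + 1)"
    using assms(3) by (intro mult_right_mono) auto
  hence "3 * real b + 3 \<le> 3 * real b * (real b + 1) / real a"
    using assms(1) by (simp add: field_simps)
  then show "3 * (real (4 * b) + 1) < 2 * (real n - 2)"
    using assms(4) by simp
qed

end
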